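(* Consider the state process of the load-balancing system described in the context (under any dispatching policy), and the Lyapunov function $V(s)=s_{1,2}-\frac{p}{\mu_2}$ on $\mathcal S^{(N)}$. For every $s\in\mathcal S^{(N)}$ with $V(s)\ge \frac{\log N}{4\sqrt N}$, the drift satisfies $\nabla V(s)\le -\frac{\mu_1\mu_2}{4}\frac{\log N}{\sqrt N}$.
   Context: System: $N$ identical servers, Poisson arrivals of rate $\lambda N$. Service times are Coxian-2 with parameters $(\mu_1,\mu_2,p)$, $\mu_1,\mu_2>0$, $0\le p<1$: a job in service completes phase 1 at rate $\mu_1$; then with probability $1-p$ it leaves, and with probability $p$ it enters phase 2, completed at rate $\mu_2$; $\frac1{\mu_1}+\frac p{\mu_2}=1$. Each server holds at most $b$ jobs (one in service, the rest in its buffer, served in order). The state $s=(s_{i,m})$ has $s_{i,m}$ = fraction of servers with at least $i$ jobs whose job in service is in phase $m$; state space $\mathcal S^{(N)}=\{s\in\mathbb R^{b\times2}: 1\ge s_{1,m}\ge\cdots\ge s_{b,m}\ge0,\ s_{1,1}+s_{1,2}\le1,\ Ns_{i,m}\in\mathbb N\}$. The state evolves as a CTMC with transition rates $q_{s,s'}$ induced by arrivals (dispatched by the policy), phase-1 completions, and phase-2 completions; the drift of $V$ at $s$ is $\nabla V(s)=\sum_{s'\ne s}q_{s,s'}(V(s')-V(s))$. *)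

theory Defs
  imports Complex_Main
begin

text \<open>A state is a function s i m (i = number-of-jobs threshold in 1..b, m = phase in {1,2});
  entries outside this index range are fixed to 0.\<close>
type_synonym state = "nat \<Rightarrow> nat \<Rightarrow> real"

definition state_space :: "nat \<Rightarrow> nat \<Rightarrow> state set" where
  "state_space N b = {s.
     (\<forall>i m. (i < 1 \<or> i > b \<or> m \<notin> {1,2}) \<longrightarrow> s i m = 0) \<and>
     (\<forall>m\<in>{1,2}. s 1 m \<le> 1 \<and> (\<forall>i. 1 \<le> i \<and> i < b \<longrightarrow> s (Suc i) m \<le> s i m) \<and> 0 \<le> s b m) \<and>
     s 1 1 + s 1 2 \<le> 1 \<and>
     (\<forall>i m. \<exists>k::nat. real N * s i m = real k)}"

text \<open>Server classes an arrival can be dispatched to: (0,1) = empty server,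
  (i,m) with 1 \<le> i \<le> b = server with exactly i jobs whose job in service is in phase m.
  Arrivals to full servers (i = b) are lost.\<close>
definition classes :: "nat \<Rightarrow> (nat \<times> nat) set" where
  "classes b = insert (0,1) ({1..b} \<times> {1,2})"

definition cnt :: "state \<Rightarrow> nat \<Rightarrow> nat \<Rightarrow> real" where
  "cnt s i m = s i m - s (Suc i) m"

definition arr_res :: "nat \<Rightarrow> nat \<Rightarrow> state \<Rightarrow> nat \<times> nat \<Rightarrow> state" where
  "arr_res N b s c = (\<lambda>j k. s j k +
     (if fst c < b \<and> j = Suc (fst c) \<and> k = (if fst c = 0 then 1 else snd c)
      then 1 / real N else 0))"

text \<open>Phase-1 completion at a server with i jobs, job leaves (next job starts in phase 1).\<close>
definition d1_leave :: "nat \<Rightarrow> state \<Rightarrow> nat \<Rightarrow> state" where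
  "d1_leave N s i = (\<lambda>j k. s j k - (if j = i \<and> k = 1 then 1 / real N else 0))"

text \<open>Phase-1 completion at a server with i jobs, job enters phase 2.\<close>
definition d1_phase :: "nat \<Rightarrow> state \<Rightarrow> nat \<Rightarrow> state" where
  "d1_phase N s i = (\<lambda>j k. s j k +
     (if 1 \<le> j \<and> j \<le> i then (if k = 1 then - 1 / real N else if k = 2 then 1 / real N else 0) else 0))"

text \<open>Phase-2 completion at a server with i jobs (next job starts in phase 1).\<close>
definition d2 :: "nat \<Rightarrow> state \<Rightarrow> nat \<Rightarrow> state" where
  "d2 N s i = (\<lambda>j k. s j k
     - (if 1 \<le> j \<and> j \<le> i \<and> k = 2 then 1 / real N else 0)
     + (if 1 \<le> j \<and> j < i \<and> k = 1 then 1 / real N else 0))"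

text \<open>Transition rates q_{s,s'}; pol s c is the probability that the policy dispatches an
  arrival in state s to a server of class c.\<close>
definition qrate :: "nat \<Rightarrow> nat \<Rightarrow> real \<Rightarrow> real \<Rightarrow> real \<Rightarrow> real \<Rightarrow>
    (state \<Rightarrow> nat \<times> nat \<Rightarrow> real) \<Rightarrow> state \<Rightarrow> state \<Rightarrow> real" where
  "qrate N b lam mu1 mu2 p pol s s' =
     (\<Sum>c\<in>classes b. if arr_res N b s c = s' then lam * real N * pol s c else 0)
   + (\<Sum>i\<in>{1..b}. if d1_leave N s i = s' then mu1 * real N * cnt s i 1 * (1 - p) else 0)
   + (\<Sum>i\<in>{1..b}. if d1_phase N s i = s' then mu1 * real N * cnt s i 1 * p else 0)
   + (\<Sum>i\<in>{1..b}. if d2 N s i = s' then mu2 * real N * cnt s i 2 else 0)"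

text \<open>All states reachable in one transition (qrate s s' = 0 outside this finite set).\<close>
definition succs :: "nat \<Rightarrow> nat \<Rightarrow> state \<Rightarrow> state set" where
  "succs N b s = arr_res N b s ` classes b \<union> d1_leave N s ` {1..b}
     \<union> d1_phase N s ` {1..b} \<union> d2 N s ` {1..b}"

definition drift :: "nat \<Rightarrow> nat \<Rightarrow> real \<Rightarrow> real \<Rightarrow> real \<Rightarrow> real \<Rightarrow>
    (state \<Rightarrow> nat \<times> nat \<Rightarrow> real) \<Rightarrow> (state \<Rightarrow> real) \<Rightarrow> state \<Rightarrow> real" where
  "drift N b lam mu1 mu2 p pol V s =
     (\<Sum>s'\<in>succs N b s - {s}. qrate N b lam mu1 mu2 p pol s s' * (V s' - V s))"

end

theory Submission
  imports Defs
begin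

text \<open>Only two kinds of transitions move \<open>s\<^sub>1\<^sub>,\<^sub>2\<close>, the fraction of busy servers in phase 2:
  a phase-1 completion followed by phase 2 (rate \<open>\<mu>\<^sub>1 p N s\<^sub>1\<^sub>,\<^sub>1\<close> in total) raises it by \<open>1/N\<close>,
  and a phase-2 completion (total rate \<open>\<mu>\<^sub>2 N s\<^sub>1\<^sub>,\<^sub>2\<close>) lowers it by \<open>1/N\<close>. Arrivals never change it,
  since a job arriving at an empty server starts in phase 1. With \<open>s\<^sub>1\<^sub>,\<^sub>1 \<le> 1 - s\<^sub>1\<^sub>,\<^sub>2\<close> and the normalisation
  \<open>\<mu>\<^sub>2 + p \<mu>\<^sub>1 = \<mu>\<^sub>1 \<mu>\<^sub>2\<close> this gives \<open>\<nabla>V(s) \<le> -\<mu>\<^sub>1 \<mu>\<^sub>2 V(s)\<close>.\<close>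

lemma sum_targets_regroup:
  fixes f :: "'a \<Rightarrow> 'b" and r :: "'a \<Rightarrow> real" and h :: "'b \<Rightarrow> real"
  assumes "finite A" "finite S" "f ` A \<subseteq> S" "h x = 0"
  shows "(\<Sum>y\<in>S - {x}. (\<Sum>a\<in>A. if f a = y then r a else 0) * h y) = (\<Sum>a\<in>A. r a * h (f a))"
proof -
  have "(\<Sum>y\<in>S - {x}. (\<Sum>a\<in>A. if f a = y then r a else 0) * h y)
      = (\<Sum>y\<in>S - {x}. \<Sum>a\<in>A. if f a = y then r a * h y else 0)"
    by (simp add: sum_distrib_right) (intro sum.cong refl, simp)
  also have "\<dots> = (\<Sum>a\<in>A. \<Sum>y\<in>S - {x}. if f a = y then r a * h y else 0)"
    by (rule sum.swap)
  also have "\<dots> = (\<Sum>a\<in>A. r a * h (f a))"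
    using assms by (intro sum.cong refl) (auto simp: sum.delta)
  finally show ?thesis .
qed

lemma drift_eq_sum_transitions:
  "drift N b lam mu1 mu2 p pol V s =
      (\<Sum>c\<in>classes b. lam * real N * pol s c * (V (arr_res N b s c) - V s))
    + (\<Sum>i\<in>{1..b}. mu1 * real N * cnt s i 1 * (1 - p) * (V (d1_leave N s i) - V s))
    + (\<Sum>i\<in>{1..b}. mu1 * real N * cnt s i 1 * p * (V (d1_phase N s i) - V s))
    + (\<Sum>i\<in>{1..b}. mu2 * real N * cnt s i 2 * (V (d2 N s i) - V s))"
proof -
  define h where "h x = V x - V s" for x
  have fin: "finite (succs N b s)" "finite (classes b)"
    unfolding succs_def classes_def by auto
  have sub: "arr_res N b s ` classes b \<subseteq> succs N b s" "d1_leave N s ` {1..b} \<subseteq> succs N b s"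
    "d1_phase N s ` {1..b} \<subseteq> succs N b s" "d2 N s ` {1..b} \<subseteq> succs N b s"
    unfolding succs_def by auto
  have "h s = 0" unfolding h_def by simp
  note regroup = sum_targets_regroup[where h = h, OF _ fin(1) _ this]
  show ?thesis
    unfolding drift_def qrate_def distrib_right sum.distrib h_def[symmetric]
    using regroup[OF fin(2) sub(1)] regroup[OF _ sub(2)] regroup[OF _ sub(3)] regroup[OF _ sub(4)]
    by simp
qed

lemma sum_cnt_telescope:
  assumes "b \<ge> 1"
  shows "(\<Sum>i\<in>{1..b}. cnt s i m) = s 1 m - s (Suc b) m"
proof -
  have "(\<Sum>i\<in>{1..b}. cnt s i m) = - (\<Sum>i = 1..b. s (Suc i) m - s i m)"
    by (simp add: cnt_def sum_negf[symmetric])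
  then show ?thesis
    using sum_Suc_diff[of 1 b "\<lambda>i. s i m"] assms by simp
qed

lemma state_space_beyond_b:
  assumes "s \<in> state_space N b"
  shows "s (Suc b) m = 0"
  using assms unfolding state_space_def by auto

lemma state_space_busy_le_one:
  assumes "s \<in> state_space N b"
  shows "s 1 1 + s 1 2 \<le> 1"
  using assms unfolding state_space_def by auto

lemma drift_phase2_busy:
  assumes "N \<ge> 1" "b \<ge> 1" "s \<in> state_space N b"
  shows "drift N b lam mu1 mu2 p pol (\<lambda>x. x 1 2 - a) s = mu1 * p * s 1 1 - mu2 * s 1 2"
proof -
  have "real N \<noteq> 0" using assms(1) by simp
  then have "(\<Sum>i\<in>{1..b}. mu1 * real N * cnt s i 1 * p * (d1_phase N s i 1 2 - s 1 2))
        = (\<Sum>i\<in>{1..b}. mu1 * p * cnt s i 1)"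
    and "(\<Sum>i\<in>{1..b}. mu2 * real N * cnt s i 2 * (d2 N s i 1 2 - s 1 2))
        = (\<Sum>i\<in>{1..b}. - (mu2 * cnt s i 2))"
    by (auto simp: d1_phase_def d2_def intro!: sum.cong)
  moreover have "arr_res N b s c 1 2 = s 1 2" for c
    by (simp add: arr_res_def)
  moreover have "d1_leave N s i 1 2 = s 1 2" for i
    by (simp add: d1_leave_def)
  ultimately have "drift N b lam mu1 mu2 p pol (\<lambda>x. x 1 2 - a) s
      = (\<Sum>i\<in>{1..b}. mu1 * p * cnt s i 1) + (\<Sum>i\<in>{1..b}. - (mu2 * cnt s i 2))"
    unfolding drift_eq_sum_transitions by simp
  also have "\<dots> = mu1 * p * s 1 1 - mu2 * s 1 2"
  proof -
    have "(\<Sum>i\<in>{1..b}. cnt s i m) = s 1 m" for m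
      using sum_cnt_telescope[OF assms(2)] state_space_beyond_b[OF assms(3)] by simp
    then show ?thesis
      by (simp only: sum_negf flip: sum_distrib_left)
  qed
  finally show ?thesis .
qed

lemma drift_phase2_le:
  assumes "N \<ge> 1" "b \<ge> 1" "s \<in> state_space N b"
    and "mu1 > 0" "mu2 > 0" "p \<ge> 0" "1 / mu1 + p / mu2 = 1"
  shows "drift N b lam mu1 mu2 p pol (\<lambda>x. x 1 2 - p / mu2) s \<le> - (mu1 * mu2) * (s 1 2 - p / mu2)"
proof -
  have coxian: "mu2 + p * mu1 = mu1 * mu2"
    using assms(4,5,7) by (simp add: field_simps)
  have "drift N b lam mu1 mu2 p pol (\<lambda>x. x 1 2 - p / mu2) s = mu1 * p * s 1 1 - mu2 * s 1 2"
    using drift_phase2_busy[OF assms(1-3)] .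
  also have "\<dots> \<le> mu1 * p * (1 - s 1 2) - mu2 * s 1 2"
    using assms(4,6) state_space_busy_le_one[OF assms(3)] by (simp add: mult_left_mono)
  also have "\<dots> = mu1 * p - (mu2 + p * mu1) * s 1 2"
    by (simp add: algebra_simps)
  also have "\<dots> = mu1 * p - mu1 * mu2 * s 1 2"
    by (simp only: coxian)
  also have "\<dots> = - (mu1 * mu2) * (s 1 2 - p / mu2)"
    using assms(5) by (simp add: field_simps)
  finally show ?thesis .
qed

theorem lemma11:
  fixes N b :: nat and lam mu1 mu2 p :: real
    and pol :: "state \<Rightarrow> nat \<times> nat \<Rightarrow> real"
  assumes "N \<ge> 1" and "b \<ge> 1" and "lam > 0"
    and "mu1 > 0" and "mu2 > 0" and "0 \<le> p" and "p < 1"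
    and "1 / mu1 + p / mu2 = 1"
    and "\<forall>s\<in>state_space N b. (\<forall>c\<in>classes b. pol s c \<ge> 0) \<and> (\<Sum>c\<in>classes b. pol s c) = 1"
  shows "\<forall>s\<in>state_space N b.
           s 1 2 - p / mu2 \<ge> ln (real N) / (4 * sqrt (real N)) \<longrightarrow>
           drift N b lam mu1 mu2 p pol (\<lambda>x. x 1 2 - p / mu2) s
             \<le> - (mu1 * mu2 / 4) * (ln (real N) / sqrt (real N))"
proof (intro ballI impI)
  fix s assume s: "s \<in> state_space N b"
    and large: "s 1 2 - p / mu2 \<ge> ln (real N) / (4 * sqrt (real N))"
  have "drift N b lam mu1 mu2 p pol (\<lambda>x. x 1 2 - p / mu2) s \<le> - (mu1 * mu2) * (s 1 2 - p / mu2)"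
    using drift_phase2_le[OF assms(1,2) s assms(4,5,6,8)] .
  also have "\<dots> \<le> - (mu1 * mu2) * (ln (real N) / (4 * sqrt (real N)))"
    using large assms(4,5) by (intro mult_left_mono_neg) auto
  finally show "drift N b lam mu1 mu2 p pol (\<lambda>x. x 1 2 - p / mu2) s
      \<le> - (mu1 * mu2 / 4) * (ln (real N) / sqrt (real N))"
    by simp
qed

end
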